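(* Let $N\ge1$ and $W(x,y)=W_N(x,y)=1+\sum_{n=1}^N\frac{P_{n-1}(y)}{x^n}$, regarded as a function of two real variables, with partial derivatives $W_x,W_y$. Then for every real $x\ge x_N$, with $y=\log x$, there exists $\theta$ with $|\theta|\le1$ such that \[ W+xW+xW_x+W_y-x-y-\log W=\theta\, r_{N+1}\frac{y^N}{x^N}, \] where $W,W_x,W_y$ are evaluated at $(x,\log x)$ and $r_{N+1}=3\cdot(N+1)!$.
   Context: The polynomials $P_n(y)$ are defined by $P_0(y)=y-1$ and, for $n\ge1$, $P_n=nP_{n-1}-P'_{n-1}+\frac{1}{n}\sum_{k=1}^{n-1}k\{(k-1)P_{k-1}-P_k-P'_{k-1}\}P_{n-k-1}$. The integers $a_n$ are defined by $a_1=1$, $a_n=n\cdot n!+\sum_{k=1}^{n-1}k!\,a_{n-k}$. Let $c_N>0$ be a constant such that $x\bigl(1-\sum_{n=1}^N\frac{n!}{x^n}\bigr)\ge1$ for all real $x\ge c_N$, and let $d_N>0$ be a constant such that for every complex $x$ with $|x|\ge d_N$ one has $\log(1-\sum_{n=1}^N n!x^{-n})^{-1}=\sum_{n=1}^N\frac{a_n}{n}x^{-n}+\theta\frac{a_{N+1}}{N+1}x^{-N-1}$ for some $|\theta|\le1$ (principal logarithm). Let $\alpha_N=\max(e,c_N,d_N)$, let $\beta_N\ge e$ be the solution of $\frac{x}{\log x}=\alpha_N$, and $x_N=\max(\beta_N,\,4(N+1)/3,\,e^2)$. *)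

theory Defs
  imports "HOL-Analysis.Analysis" "HOL-Computational_Algebra.Polynomial"
begin

function Ppoly :: "nat \<Rightarrow> real poly" where
  "Ppoly 0 = [:-1, 1:]"
| "Ppoly (Suc m) =
     smult (real (Suc m)) (Ppoly m) - pderiv (Ppoly m)
     + smult (1 / real (Suc m))
         (\<Sum>k\<in>{1..m}. smult (real k)
             (smult (real k - 1) (Ppoly (k - 1)) - Ppoly k - pderiv (Ppoly (k - 1)))
           * Ppoly (m - k))"
  by pat_completeness auto
termination
  by (relation "Wellfounded.measure id") auto

text \<open>The integers a_n (a_0 = 0 is an unused dummy; a_1 = 1).\<close>
function aseq :: "nat \<Rightarrow> nat" where
  "aseq 0 = 0"
| "aseq (Suc m) = Suc m * fact (Suc m) + (\<Sum>k\<in>{1..m}. fact k * aseq (Suc m - k))"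
  by pat_completeness auto
termination
  by (relation "Wellfounded.measure id") auto

definition W :: "nat \<Rightarrow> real \<Rightarrow> real \<Rightarrow> real" where
  "W N x y = 1 + (\<Sum>n\<in>{1..N}. poly (Ppoly (n - 1)) y / x ^ n)"

definition c_prop :: "nat \<Rightarrow> real \<Rightarrow> bool" where
  "c_prop N c \<longleftrightarrow> c > 0 \<and>
     (\<forall>x::real. x \<ge> c \<longrightarrow> x * (1 - (\<Sum>n\<in>{1..N}. fact n / x ^ n)) \<ge> 1)"

definition d_prop :: "nat \<Rightarrow> real \<Rightarrow> bool" where
  "d_prop N d \<longleftrightarrow> d > 0 \<and>
     (\<forall>z::complex. norm z \<ge> d \<longrightarrow>
        (\<exists>\<theta>::complex. norm \<theta> \<le> 1 \<and>
           Ln (inverse (1 - (\<Sum>n\<in>{1..N}. fact n / z ^ n)))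
           = (\<Sum>n\<in>{1..N}. of_nat (aseq n) / of_nat n / z ^ n)
             + \<theta> * of_nat (aseq (N + 1)) / of_nat (N + 1) / z ^ (N + 1)))"

end

theory Submission
  imports Defs "HOL-Computational_Algebra.Polynomial_FPS"
begin

text \<open>Write W = 1 + V(1/x) with V(u) = \<Sum>n P_{n-1}(y) u^n. The recursion defining P_n is
  the coefficient recursion of log (1 + V(u)), whose Taylor coefficients are therefore
  A_n = P_n - (n-1) P_{n-1} + P'_{n-1}; on the other hand W + xW + xW_x + W_y - x - y equals
  \<Sum>n\<le>N A_n / x^n - P_N / x^N. So the left-hand side is -P_N / x^N minus the error made by
  truncating the series of log W after degree N.

  The P_n are dominated coefficientwise by polynomials R_n with nonnegative coefficients, which
  gives |P_n(y)| \<le> 9/8 (n+1)! y^n for y \<ge> 2. Hence V is dominated by B(u) = \<Sum>n n! (yu)^n, and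
  the truncation error of log (1 + V) is at most that of -log (1 - B), which the choice of d_N
  bounds by a_{N+1}/(N+1) (y/x)^{N+1}. As a_n \<le> 3 n n! and x/y \<ge> 2, this is at most
  3/2 (N+1)! y^N/x^N; together with 9/8 (N+1)! y^N/x^N for the P_N term, the total stays below
  3 (N+1)! y^N/x^N.\<close>

definition dominated :: "real poly \<Rightarrow> real poly \<Rightarrow> bool" where
  "dominated p q \<longleftrightarrow> (\<forall>j. \<bar>coeff p j\<bar> \<le> coeff q j)"

lemma dominated_coeff_nonneg: "dominated p q \<Longrightarrow> coeff q j \<ge> 0"
  unfolding dominated_def by (meson abs_ge_zero order_trans)

lemma dominated_zero: "dominated 0 0"
  by (simp add: dominated_def)

lemma dominated_add: "dominated p P \<Longrightarrow> dominated q Q \<Longrightarrow> dominated (p + q) (P + Q)"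
  unfolding dominated_def by (auto intro: order_trans[OF abs_triangle_ineq] add_mono)

lemma dominated_diff: "dominated p P \<Longrightarrow> dominated q Q \<Longrightarrow> dominated (p - q) (P + Q)"
  unfolding dominated_def by (auto intro: order_trans[OF abs_triangle_ineq4] add_mono)

lemma dominated_smult: "c \<ge> 0 \<Longrightarrow> dominated p P \<Longrightarrow> dominated (smult c p) (smult c P)"
  unfolding dominated_def by (auto simp: abs_mult intro: mult_left_mono)

lemma dominated_pderiv: "dominated p P \<Longrightarrow> dominated (pderiv p) (pderiv P)"
  unfolding dominated_def by (auto simp: coeff_pderiv abs_mult intro: mult_left_mono)

lemma dominated_mult:
  assumes "dominated p P" "dominated q Q"
  shows "dominated (p * q) (P * Q)"
  unfolding dominated_def
proof
  fix n
  have "\<bar>coeff (p * q) n\<bar> \<le> (\<Sum>i\<le>n. \<bar>coeff p i * coeff q (n - i)\<bar>)"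
    unfolding coeff_mult by (rule sum_abs)
  also have "\<dots> \<le> (\<Sum>i\<le>n. coeff P i * coeff Q (n - i))"
    using assms unfolding dominated_def
    by (intro sum_mono) (auto simp: abs_mult intro: mult_mono dominated_coeff_nonneg[OF assms(1)])
  finally show "\<bar>coeff (p * q) n\<bar> \<le> coeff (P * Q) n"
    by (simp add: coeff_mult)
qed

lemma dominated_sum: "(\<And>k. k \<in> A \<Longrightarrow> dominated (f k) (g k)) \<Longrightarrow> dominated (sum f A) (sum g A)"
  by (induction A rule: infinite_finite_induct) (simp_all add: dominated_zero dominated_add)

lemma dominated_power:
  assumes "dominated p P"
  shows "dominated (p ^ k) (P ^ k)"
proof (induction k)
  case 0
  show ?case by (auto simp: dominated_def coeff_1)
next
  case (Suc k)
  show ?case using dominated_mult[OF assms Suc] by simp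
qed

lemma poly_eq_sum_atMost:
  fixes p :: "real poly"
  assumes "degree p \<le> D"
  shows "poly p x = (\<Sum>i\<le>D. coeff p i * x ^ i)"
  unfolding poly_altdef using assms
  by (intro sum.mono_neutral_left) (auto simp: coeff_eq_0)

lemma abs_poly_le_dominating:
  assumes "dominated p P" "(y::real) \<ge> 0"
  shows "\<bar>poly p y\<bar> \<le> poly P y"
proof -
  define D where "D = max (degree p) (degree P)"
  have "\<bar>poly p y\<bar> = \<bar>\<Sum>i\<le>D. coeff p i * y ^ i\<bar>"
    by (subst poly_eq_sum_atMost[of p D]) (auto simp: D_def)
  also have "\<dots> \<le> (\<Sum>i\<le>D. \<bar>coeff p i * y ^ i\<bar>)"
    by (rule sum_abs)
  also have "\<dots> \<le> (\<Sum>i\<le>D. coeff P i * y ^ i)"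
    using assms unfolding dominated_def by (intro sum_mono) (auto simp: abs_mult intro: mult_right_mono)
  also have "\<dots> = poly P y"
    by (subst poly_eq_sum_atMost[of P D]) (auto simp: D_def)
  finally show ?thesis .
qed

lemma poly_nonneg_coeffs:
  fixes Q :: "real poly"
  assumes "\<And>j. coeff Q j \<ge> 0" "x \<ge> 0"
  shows "poly Q x \<ge> 0"
  using assms by (simp add: poly_altdef sum_nonneg)

lemma poly_nonneg_coeffs_le_scaled:
  fixes Q :: "real poly"
  assumes "\<And>j. coeff Q j \<ge> 0" "degree Q \<le> d" "0 < a" "a \<le> y"
  shows "poly Q y \<le> (y / a) ^ d * poly Q a"
  using assms
proof (induction Q arbitrary: d rule: pCons_induct)
  case 0
  then show ?case by simp
next
  case (pCons c p)
  have c0: "c \<ge> 0" using pCons.prems(1)[of 0] by simp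
  have p_nonneg: "\<And>j. coeff p j \<ge> 0" using pCons.prems(1)[of "Suc _"] by simp
  have "(y / a) ^ d \<ge> 1" using pCons.prems by (intro one_le_power) simp
  then have c_le: "c \<le> (y / a) ^ d * c" using mult_right_mono[OF _ c0] by fastforce
  show ?case
  proof (cases "p = 0")
    case True
    then show ?thesis using c_le by simp
  next
    case False
    then have dp: "degree p \<le> d - 1" "d \<ge> 1" using pCons.prems(2) by auto
    have IH: "poly p y \<le> (y / a) ^ (d - 1) * poly p a"
      using pCons.IH[OF p_nonneg dp(1)] pCons.prems by auto
    have "(y / a) ^ d = (y / a) * (y / a) ^ (d - 1)" using dp(2) by (cases d) auto
    then have scale: "y * ((y / a) ^ (d - 1) * poly p a) = (y / a) ^ d * (a * poly p a)"
      using pCons.prems(3) by (simp add: field_simps)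
    have "y * poly p y \<le> y * ((y / a) ^ (d - 1) * poly p a)"
      using IH pCons.prems by (intro mult_left_mono) auto
    then have "poly (pCons c p) y \<le> (y / a) ^ d * c + (y / a) ^ d * (a * poly p a)"
      unfolding poly_pCons using c_le scale by linarith
    then show ?thesis by (simp add: algebra_simps)
  qed
qed

lemma poly_pderiv_nonneg_coeffs_le:
  fixes Q :: "real poly"
  assumes "\<And>j. coeff Q j \<ge> 0" "degree Q \<le> d" "0 < a"
  shows "a * poly (pderiv Q) a \<le> real d * poly Q a"
  using assms
proof (induction Q arbitrary: d rule: pCons_induct)
  case 0
  then show ?case by simp
next
  case (pCons c p)
  have c0: "c \<ge> 0" using pCons.prems(1)[of 0] by simp
  have p_nonneg: "\<And>j. coeff p j \<ge> 0" using pCons.prems(1)[of "Suc _"] by simp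
  show ?case
  proof (cases "p = 0")
    case True
    then show ?thesis using c0 pCons.prems by (simp add: pderiv_pCons)
  next
    case False
    then have dp: "degree p \<le> d - 1" "d \<ge> 1" using pCons.prems(2) by auto
    have IH: "a * poly (pderiv p) a \<le> real (d - 1) * poly p a"
      using pCons.IH[OF p_nonneg dp(1)] pCons.prems by auto
    have "a * poly (pderiv (pCons c p)) a = a * poly p a + a * (a * poly (pderiv p) a)"
      by (simp add: pderiv_pCons algebra_simps)
    also have "\<dots> \<le> a * poly p a + a * (real (d - 1) * poly p a)"
      using IH pCons.prems by (intro add_left_mono mult_left_mono) auto
    also have "\<dots> = real d * (a * poly p a)"
      using dp(2) by (simp add: of_nat_diff algebra_simps)
    also have "\<dots> \<le> real d * poly (pCons c p) a"
      using c0 by (simp, intro mult_left_mono) auto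
    finally show ?thesis .
  qed
qed

section \<open>Growth of the polynomials P_n\<close>

text \<open>R_n obeys the recursion of P_n with every subtraction turned into an addition and
  R_0 = y + 1, so it has nonnegative coefficients and dominates P_n.\<close>

function Rpoly :: "nat \<Rightarrow> real poly" where
  "Rpoly 0 = [:1, 1:]"
| "Rpoly (Suc m) =
     smult (real (Suc m)) (Rpoly m) + pderiv (Rpoly m)
     + smult (1 / real (Suc m))
         (\<Sum>k\<in>{1..m}. smult (real k)
             (smult (real k - 1) (Rpoly (k - 1)) + Rpoly k + pderiv (Rpoly (k - 1)))
           * Rpoly (m - k))"
  by pat_completeness auto
termination
  by (relation "Wellfounded.measure id") auto

lemma dominated_Ppoly_Rpoly: "dominated (Ppoly n) (Rpoly n)"
proof (induction n rule: less_induct)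
  case (less n)
  show ?case
  proof (cases n)
    case 0
    then show ?thesis by (auto simp: dominated_def coeff_pCons split: nat.split)
  next
    case (Suc m)
    have IH: "\<And>k. k \<le> m \<Longrightarrow> dominated (Ppoly k) (Rpoly k)"
      using less Suc by auto
    have "dominated (\<Sum>k\<in>{1..m}. smult (real k)
          (smult (real k - 1) (Ppoly (k - 1)) - Ppoly k - pderiv (Ppoly (k - 1))) * Ppoly (m - k))
        (\<Sum>k\<in>{1..m}. smult (real k)
          (smult (real k - 1) (Rpoly (k - 1)) + Rpoly k + pderiv (Rpoly (k - 1))) * Rpoly (m - k))"
      by (intro dominated_sum dominated_mult dominated_smult dominated_diff dominated_pderiv IH) auto
    then show ?thesis
      unfolding Suc Ppoly.simps Rpoly.simps
      by (intro dominated_add dominated_diff dominated_smult dominated_pderiv less) (auto simp: Suc)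
  qed
qed

lemma coeff_Rpoly_nonneg: "coeff (Rpoly n) j \<ge> 0"
  using dominated_Ppoly_Rpoly dominated_coeff_nonneg by blast

lemma degree_Rpoly: "n \<ge> 1 \<Longrightarrow> degree (Rpoly n) \<le> n"
proof (induction n rule: less_induct)
  case (less n)
  then obtain m where m: "n = Suc m" by (cases n) auto
  have IH: "degree (Rpoly k) \<le> max 1 k" if "k \<le> m" for k
    using less.IH[of k] that m by (cases "k = 0") auto
  have term_deg: "degree (smult (real k) (smult (real k - 1) (Rpoly (k - 1)) + Rpoly k
      + pderiv (Rpoly (k - 1))) * Rpoly (m - k)) \<le> Suc m" if k: "k \<in> {1..m}" for k
  proof -
    have "degree (Rpoly (k - 1)) \<le> max 1 (k - 1)"
      using k by (intro IH) auto
    also have "\<dots> \<le> k"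
      using k by simp
    finally have "degree (smult (real k - 1) (Rpoly (k - 1)) + Rpoly k + pderiv (Rpoly (k - 1))) \<le> k"
      using IH[of k] k
      by (intro degree_add_le order_trans[OF degree_smult_le]) (auto simp: degree_pderiv)
    then have "degree (smult (real k) (smult (real k - 1) (Rpoly (k - 1)) + Rpoly k
        + pderiv (Rpoly (k - 1)))) \<le> k"
      by (rule order_trans[OF degree_smult_le])
    moreover have "degree (Rpoly (m - k)) \<le> Suc m - k"
      using IH[of "m - k"] k by auto
    ultimately show ?thesis
      using k by (intro order_trans[OF degree_mult_le]) auto
  qed
  have "degree (Rpoly (Suc m)) \<le> Suc m"
    unfolding Rpoly.simps using IH[of m]
    by (intro degree_add_le order_trans[OF degree_smult_le] degree_sum_le term_deg)
      (auto simp: degree_pderiv)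
  then show ?case using m by simp
qed

definition majorant_rec :: "(nat \<Rightarrow> real) \<Rightarrow> (nat \<Rightarrow> real) \<Rightarrow> nat \<Rightarrow> real" where
  "majorant_rec g h m = real (Suc m) * g m + h m + 1 / real (Suc m) *
     (\<Sum>k\<in>{1..m}. real k * ((real k - 1) * g (k - 1) + g k + h (k - 1)) * g (m - k))"

lemma poly_Rpoly_Suc:
  "poly (Rpoly (Suc m)) y = majorant_rec (\<lambda>k. poly (Rpoly k) y) (\<lambda>k. poly (pderiv (Rpoly k)) y) m"
  by (simp add: majorant_rec_def poly_sum mult.assoc)

lemma majorant_rec_mono:
  assumes g: "\<And>k. k \<le> m \<Longrightarrow> 0 \<le> g k \<and> g k \<le> G k"
    and h: "\<And>k. k \<le> m \<Longrightarrow> 0 \<le> h k \<and> h k \<le> H k"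
  shows "majorant_rec g h m \<le> majorant_rec G H m"
proof -
  have "real k * ((real k - 1) * g (k - 1) + g k + h (k - 1)) * g (m - k)
      \<le> real k * ((real k - 1) * G (k - 1) + G k + H (k - 1)) * G (m - k)" if k: "k \<in> {1..m}" for k
  proof -
    have "0 \<le> (real k - 1) * g (k - 1) + g k + h (k - 1)"
      using g h k by auto
    moreover have "(real k - 1) * g (k - 1) + g k + h (k - 1) \<le> (real k - 1) * G (k - 1) + G k + H (k - 1)"
      using g[of "k - 1"] g[of k] h[of "k - 1"] k by (intro add_mono mult_left_mono) auto
    ultimately show ?thesis
      using g[of "m - k"] k by (intro mult_mono mult_left_mono) auto
  qed
  then have "(\<Sum>k\<in>{1..m}. real k * ((real k - 1) * g (k - 1) + g k + h (k - 1)) * g (m - k))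
      \<le> (\<Sum>k\<in>{1..m}. real k * ((real k - 1) * G (k - 1) + G k + H (k - 1)) * G (m - k))"
    by (rule sum_mono)
  then show ?thesis
    unfolding majorant_rec_def using g[of m] h[of m]
    by (intro add_mono mult_left_mono) auto
qed

text \<open>The bounds R_n(2) \<le> G_n and R'_n(2) \<le> n G_n / 2, with G_n = 9/8 (n+1)! 2^n, propagate
  through the recursion (at n = 0 the exact values R_0(2) = 3 and R'_0(2) = 1 are used). The
  general estimate of the recursion needs m \<ge> 13; smaller m are checked numerically.\<close>

definition Rbound :: "nat \<Rightarrow> real" where
  "Rbound n = (if n = 0 then 3 else 9/8 * fact (n + 1) * 2 ^ n)"

definition Rbound' :: "nat \<Rightarrow> real" where
  "Rbound' n = (if n = 0 then 1 else real n / 2 * Rbound n)"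

lemma Rbound_pos: "Rbound n > 0"
  by (simp add: Rbound_def)

lemma Rbound_Suc: "Rbound (Suc n) = 2 * (real n + 2) * Rbound n" if "n \<ge> 1"
  using that by (simp add: Rbound_def algebra_simps)

lemma majorant_rec_Rbound_small:
  assumes "m \<le> 12"
  shows "majorant_rec Rbound Rbound' m \<le> Rbound (Suc m)"
proof -
  have "m = 0 \<or> m = 1 \<or> m = 2 \<or> m = 3 \<or> m = 4 \<or> m = 5 \<or> m = 6 \<or> m = 7 \<or> m = 8
      \<or> m = 9 \<or> m = 10 \<or> m = 11 \<or> m = 12"
    using assms by presburger
  then show ?thesis
    by (elim disjE)
      (simp_all add: majorant_rec_def Rbound_def Rbound'_def numeral_eq_Suc atLeastAtMostSuc_conv)
qed

lemma sum_atLeastAtMost_split_ends: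
  fixes f :: "nat \<Rightarrow> 'a::comm_monoid_add"
  assumes "m \<ge> 2"
  shows "(\<Sum>k\<in>{1..m}. f k) = f 1 + (\<Sum>k\<in>{2..m-1}. f k) + f m"
proof -
  obtain m' where m': "m = Suc m'" using assms by (cases m) auto
  have "(\<Sum>k\<in>{1..m}. f k) = f 1 + (\<Sum>k\<in>{Suc 1..m}. f k)"
    using assms by (intro sum.atLeast_Suc_atMost) auto
  also have "(\<Sum>k\<in>{Suc 1..m}. f k) = (\<Sum>k\<in>{2..m-1}. f k) + f m"
    using assms unfolding m' by (subst sum.cl_ivl_Suc) (auto simp: numeral_2_eq_2)
  finally show ?thesis by (simp add: add.assoc)
qed

lemma fact_mult_le_two_fact:
  fixes a b :: nat
  assumes "2 \<le> a" "2 \<le> b"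
  shows "fact a * fact b \<le> (2::real) * fact (a + b - 2)"
  using assms(1)
proof (induction a rule: dec_induct)
  case base
  then show ?case by (simp add: numeral_eq_Suc)
next
  case (step a)
  have ab: "a + b - 1 = Suc (a + b - 2)" "Suc a + b - 2 = a + b - 1"
    using step assms by auto
  have "fact (Suc a) * fact b = real (Suc a) * (fact a * fact b)"
    by simp
  also have "\<dots> \<le> real (Suc a) * (2 * fact (a + b - 2))"
    using step.IH by (intro mult_left_mono) auto
  also have "\<dots> \<le> real (a + b - 1) * (2 * fact (a + b - 2))"
    using assms by (intro mult_right_mono) auto
  also have "\<dots> = 2 * fact (Suc a + b - 2)"
    unfolding ab(2) by (subst (2) ab(1)) (simp only: fact_Suc, simp add: ab(1)[symmetric])
  finally show ?case .
qed

lemma Rbound_inner_le: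
  assumes "k \<ge> 2"
  shows "(real k - 1) * Rbound (k - 1) + Rbound k + Rbound' (k - 1) \<le> 7/4 * Rbound k"
proof -
  have "Rbound' (k - 1) = (real k - 1) / 2 * Rbound (k - 1)"
    using assms by (simp add: Rbound'_def of_nat_diff)
  moreover have "Rbound k = 2 * (real k + 1) * Rbound (k - 1)"
    using Rbound_Suc[of "k - 1"] assms by (simp add: of_nat_diff)
  ultimately show ?thesis
    using Rbound_pos[of "k - 1"] by (simp add: field_simps)
qed

lemma Rbound_term_le:
  assumes "2 \<le> k" "k \<le> m - 1"
  shows "real k * ((real k - 1) * Rbound (k - 1) + Rbound k + Rbound' (k - 1)) * Rbound (m - k)
    \<le> 63/16 * Rbound m"
proof -
  have mk: "m - k \<ge> 1" "k \<ge> 1" using assms by auto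
  have "fact (k + 1) * fact (m - k + 1) \<le> (2::real) * fact (k + 1 + (m - k + 1) - 2)"
    by (rule fact_mult_le_two_fact) (use assms in auto)
  also have "k + 1 + (m - k + 1) - 2 = m"
    using assms by auto
  finally have fact_le: "fact (k + 1) * fact (m - k + 1) \<le> (2::real) * fact m" .
  have "real k * ((real k - 1) * Rbound (k - 1) + Rbound k + Rbound' (k - 1)) * Rbound (m - k)
      \<le> real k * (7/4 * Rbound k) * Rbound (m - k)"
    using Rbound_inner_le[OF assms(1)] Rbound_pos[of "m - k"]
    by (intro mult_right_mono mult_left_mono) auto
  also have "\<dots> = real k * (7/4) * (81/64) * (fact (k + 1) * fact (m - k + 1)) * 2 ^ m"
  proof -
    have "(2::real) ^ m = 2 ^ k * 2 ^ (m - k)"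
      using assms by (simp add: power_add[symmetric])
    then show ?thesis
      using mk by (simp add: Rbound_def algebra_simps del: fact_Suc)
  qed
  also have "\<dots> \<le> real m * (7/4) * (81/64) * (2 * fact m) * 2 ^ m"
  proof -
    have "real k * (7/4) * (81/64) * (fact (k + 1) * fact (m - k + 1))
        \<le> real m * (7/4) * (81/64) * (2 * fact m)"
      by (rule mult_mono[OF _ fact_le]) (use assms in auto)
    then show ?thesis by (rule mult_right_mono) simp
  qed
  also have "\<dots> = 63/16 * (9/8 * (real m * fact m) * 2 ^ m)"
    by simp
  also have "\<dots> \<le> 63/16 * (9/8 * fact (m + 1) * 2 ^ m)"
    by (intro mult_left_mono mult_right_mono) auto
  also have "\<dots> = 63/16 * Rbound m"
    using assms by (simp add: Rbound_def)
  finally show ?thesis .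
qed

lemma sum_Rbound_term_le:
  assumes "m \<ge> 2"
  shows "(\<Sum>k\<in>{1..m}. real k * ((real k - 1) * Rbound (k - 1) + Rbound k + Rbound' (k - 1))
      * Rbound (m - k)) \<le> (147/16 * real m + 3/8) * Rbound m"
proof -
  define G where "G = Rbound m"
  define T where "T k = real k * ((real k - 1) * Rbound (k - 1) + Rbound k + Rbound' (k - 1))
      * Rbound (m - k)" for k
  have G_pos: "G > 0" using Rbound_pos by (simp add: G_def)
  have "T 1 = 11/2 * Rbound (m - 1)"
    by (simp add: T_def Rbound_def Rbound'_def)
  also have "\<dots> \<le> 2 * (real m + 1) * Rbound (m - 1)"
    using Rbound_pos[of "m - 1"] assms by (intro mult_right_mono) auto
  also have "\<dots> = G"
    using Rbound_Suc[of "m - 1"] assms by (simp add: G_def of_nat_diff)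
  finally have T_first: "T 1 \<le> G" .
  have "(\<Sum>k\<in>{2..m-1}. T k) \<le> of_nat (card {2..m-1}) * (63/16 * G)"
    by (rule sum_bounded_above) (use Rbound_term_le in \<open>auto simp: T_def G_def\<close>)
  then have T_mid: "(\<Sum>k\<in>{2..m-1}. T k) \<le> (real m - 2) * (63/16 * G)"
    using assms by (simp add: of_nat_diff)
  have "T m = real m * ((real m - 1) * Rbound (m - 1) + Rbound m + Rbound' (m - 1)) * 3"
    by (simp add: T_def Rbound_def)
  also have "\<dots> \<le> real m * (7/4 * G) * 3"
    unfolding G_def using Rbound_inner_le[of m] assms by (intro mult_right_mono mult_left_mono) auto
  finally have T_last: "T m \<le> 21/4 * (real m + 1) * G"
    using G_pos by (simp add: field_simps)
  show ?thesis
    using T_first T_mid T_last G_pos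
    unfolding T_def[symmetric] G_def[symmetric] sum_atLeastAtMost_split_ends[OF assms]
    by (simp add: algebra_simps)
qed

lemma majorant_rec_Rbound_large:
  assumes "m \<ge> 13"
  shows "majorant_rec Rbound Rbound' m \<le> Rbound (Suc m)"
proof -
  have "(\<Sum>k\<in>{1..m}. real k * ((real k - 1) * Rbound (k - 1) + Rbound k + Rbound' (k - 1))
      * Rbound (m - k)) \<le> (147/16 * real m + 3/8) * Rbound m"
    using assms by (intro sum_Rbound_term_le) simp
  also have "\<dots> \<le> (real m / 2 + 3) * (real m + 1) * Rbound m"
  proof (rule mult_right_mono)
    have "13 * real m \<le> real m * real m"
      using assms by (intro mult_right_mono) auto
    moreover have "(real m / 2 + 3) * (real m + 1) = real m * real m / 2 + 7/2 * real m + 3"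
      by (simp add: field_simps)
    ultimately show "147/16 * real m + 3/8 \<le> (real m / 2 + 3) * (real m + 1)"
      by linarith
  qed (use Rbound_pos[of m] in simp)
  finally have "1 / real (Suc m) * (\<Sum>k\<in>{1..m}. real k * ((real k - 1) * Rbound (k - 1)
      + Rbound k + Rbound' (k - 1)) * Rbound (m - k)) \<le> (real m / 2 + 3) * Rbound m"
    by (simp add: field_simps)
  moreover have "Rbound' m = real m / 2 * Rbound m"
    using assms by (simp add: Rbound'_def)
  moreover have "Rbound (Suc m) = 2 * (real m + 2) * Rbound m"
    using Rbound_Suc[of m] assms by simp
  ultimately show ?thesis
    unfolding majorant_rec_def by (simp add: algebra_simps)
qed

lemma majorant_rec_Rbound_le: "majorant_rec Rbound Rbound' m \<le> Rbound (Suc m)"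
  using majorant_rec_Rbound_small majorant_rec_Rbound_large by (cases "m \<le> 12") auto

lemma poly_pderiv_Rpoly_2_le:
  assumes "poly (Rpoly n) 2 \<le> Rbound n"
  shows "poly (pderiv (Rpoly n)) 2 \<le> Rbound' n"
proof (cases "n = 0")
  case True
  then show ?thesis by (simp add: Rbound'_def pderiv_pCons)
next
  case False
  have "2 * poly (pderiv (Rpoly n)) 2 \<le> real n * poly (Rpoly n) 2"
    using poly_pderiv_nonneg_coeffs_le[OF coeff_Rpoly_nonneg degree_Rpoly] False by simp
  also have "\<dots> \<le> real n * Rbound n"
    using assms by (intro mult_left_mono) auto
  finally show ?thesis
    using False by (simp add: Rbound'_def)
qed

lemma poly_Rpoly_2_le: "poly (Rpoly n) 2 \<le> Rbound n"
proof (induction n rule: less_induct)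
  case (less n)
  show ?case
  proof (cases n)
    case 0
    then show ?thesis by (simp add: Rbound_def)
  next
    case (Suc m)
    have "poly (Rpoly (Suc m)) 2
        = majorant_rec (\<lambda>k. poly (Rpoly k) 2) (\<lambda>k. poly (pderiv (Rpoly k)) 2) m"
      by (rule poly_Rpoly_Suc)
    also have "\<dots> \<le> majorant_rec Rbound Rbound' m"
    proof (rule majorant_rec_mono)
      fix k
      assume "k \<le> m"
      then have "poly (Rpoly k) 2 \<le> Rbound k"
        using less Suc by simp
      then show "0 \<le> poly (Rpoly k) 2 \<and> poly (Rpoly k) 2 \<le> Rbound k"
        "0 \<le> poly (pderiv (Rpoly k)) 2 \<and> poly (pderiv (Rpoly k)) 2 \<le> Rbound' k"
        using poly_pderiv_Rpoly_2_le
        by (auto intro!: poly_nonneg_coeffs simp: coeff_Rpoly_nonneg coeff_pderiv)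
    qed
    also have "\<dots> \<le> Rbound (Suc m)"
      by (rule majorant_rec_Rbound_le)
    finally show ?thesis
      using Suc by simp
  qed
qed

lemma abs_poly_Ppoly_le:
  assumes "n \<ge> 1" "(y::real) \<ge> 2"
  shows "\<bar>poly (Ppoly n) y\<bar> \<le> 9/8 * fact (n + 1) * y ^ n"
proof -
  have "\<bar>poly (Ppoly n) y\<bar> \<le> poly (Rpoly n) y"
    using abs_poly_le_dominating[OF dominated_Ppoly_Rpoly] assms by simp
  also have "\<dots> \<le> (y / 2) ^ n * poly (Rpoly n) 2"
    using poly_nonneg_coeffs_le_scaled[OF coeff_Rpoly_nonneg degree_Rpoly] assms by simp
  also have "\<dots> \<le> (y / 2) ^ n * Rbound n"
    using poly_Rpoly_2_le assms by (intro mult_left_mono) auto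
  also have "\<dots> = 9/8 * fact (n + 1) * y ^ n"
    using assms by (simp add: Rbound_def power_divide)
  finally show ?thesis .
qed

lemma abs_poly_Ppoly_pred_le:
  assumes "n \<ge> 1" "(y::real) \<ge> 2"
  shows "\<bar>poly (Ppoly (n - 1)) y\<bar> \<le> fact n * y ^ n"
proof (cases "n = 1")
  case True
  then show ?thesis using assms by simp
next
  case False
  then obtain k where k: "n = Suc k" "k \<ge> 1"
    using assms by (cases n) auto
  have "\<bar>poly (Ppoly k) y\<bar> \<le> 9/8 * fact n * y ^ k"
    using abs_poly_Ppoly_le[OF k(2) assms(2)] k by simp
  also have "\<dots> \<le> y * fact n * y ^ k"
    using assms by (intro mult_right_mono) auto
  also have "\<dots> = fact n * y ^ n"
    using k by simp
  finally show ?thesis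
    using k by simp
qed

section \<open>Growth of the integers a_n\<close>

lemma sum_fact_mult_fact_le:
  assumes "m \<ge> 4"
  shows "(\<Sum>k\<in>{1..m}. fact k * fact (m + 2 - k)) \<le> (3::real) * fact (m + 1)"
proof -
  have split: "(\<Sum>k\<in>{1..m}. fact k * fact (m + 2 - k) :: real) =
      fact (m + 1) + (\<Sum>k\<in>{2..m-1}. fact k * fact (m + 2 - k)) + 2 * fact m"
    using sum_atLeastAtMost_split_ends[of m "\<lambda>k. fact k * fact (m + 2 - k) :: real"] assms
    by (simp add: numeral_2_eq_2 mult.commute)
  have "(\<Sum>k\<in>{2..m-1}. fact k * fact (m + 2 - k) :: real) \<le> of_nat (card {2..m-1}) * (2 * fact m)"
  proof (rule sum_bounded_above)
    fix k
    assume k: "k \<in> {2..m-1}"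
    have "fact k * fact (m + 2 - k) \<le> (2::real) * fact (k + (m + 2 - k) - 2)"
      by (rule fact_mult_le_two_fact) (use k in auto)
    also have "k + (m + 2 - k) - 2 = m" using k by auto
    finally show "fact k * fact (m + 2 - k) \<le> (2::real) * fact m" .
  qed
  then have "(\<Sum>k\<in>{1..m}. fact k * fact (m + 2 - k)) \<le> fact (m + 1) + 2 * (real m - 1) * fact m"
    unfolding split using assms by (simp add: of_nat_diff algebra_simps)
  also have "\<dots> \<le> fact (m + 1) + 2 * real (m + 1) * fact m"
    by (intro add_left_mono mult_right_mono mult_left_mono) auto
  also have "\<dots> = 3 * fact (m + 1)"
    by (simp add: algebra_simps)
  finally show ?thesis .
qed

lemma aseq_le: "real (aseq n) \<le> 3 * real n * fact n"
proof (induction n rule: less_induct)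
  case (less n)
  show ?case
  proof (cases "n \<le> 4")
    case True
    then have "n = 0 \<or> n = 1 \<or> n = 2 \<or> n = 3 \<or> n = 4" by presburger
    then show ?thesis
      by (elim disjE) (simp_all add: numeral_eq_Suc atLeastAtMostSuc_conv)
  next
    case False
    then obtain m where m: "n = Suc m" "m \<ge> 4" by (cases n) auto
    have IH: "real (aseq (Suc m - k)) \<le> 3 * fact (m + 2 - k)" if k: "k \<in> {1..m}" for k
    proof -
      have "real (aseq (Suc m - k)) \<le> 3 * real (Suc m - k) * fact (Suc m - k)"
        using k m by (intro less.IH) auto
      also have "\<dots> \<le> 3 * (real (Suc (Suc m - k)) * fact (Suc m - k))"
        by simp
      also have "\<dots> = 3 * fact (m + 2 - k)"
        using k by (simp add: Suc_diff_le)
      finally show ?thesis .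
    qed
    have "real (aseq n) = real (Suc m) * fact (Suc m) + (\<Sum>k\<in>{1..m}. fact k * real (aseq (Suc m - k)))"
      unfolding m by (simp add: of_nat_sum algebra_simps)
    also have "\<dots> \<le> real (Suc m) * fact (Suc m) + 3 * (\<Sum>k\<in>{1..m}. fact k * fact (m + 2 - k))"
      unfolding sum_distrib_left using IH
      by (intro add_left_mono sum_mono) (auto simp: mult.left_commute intro: mult_left_mono)
    also have "\<dots> \<le> real (Suc m) * fact (Suc m) + 9 * fact (Suc m)"
      using sum_fact_mult_fact_le[OF m(2)] by (simp add: mult.commute)
    also have "\<dots> \<le> 3 * real n * fact n"
    proof -
      have "9 * fact (Suc m) \<le> 2 * real (Suc m) * (fact (Suc m) :: real)"
        using m by (intro mult_right_mono) auto
      moreover have "3 * real n * fact n = real (Suc m) * fact (Suc m) + 2 * real (Suc m) * (fact (Suc m) :: real)"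
        using m by (simp add: algebra_simps)
      ultimately show ?thesis by linarith
    qed
    finally show ?thesis .
  qed
qed

section \<open>Taylor coefficients of the logarithm\<close>

lemma fps_deriv_fps_ln_compose:
  fixes G :: "real fps"
  assumes "fps_nth G 0 = 0"
  shows "fps_deriv (fps_ln 1 oo G) * (1 + G) = fps_deriv G"
proof -
  have "fps_deriv (fps_ln 1 oo G) = (inverse (1 + fps_X) oo G) * fps_deriv G"
    using assms by (simp add: fps_compose_deriv fps_ln_deriv)
  also have "inverse (1 + fps_X) oo G = inverse (1 + G)"
    using assms by (simp add: fps_inverse_compose fps_compose_add_distrib)
  finally show ?thesis
    using assms inverse_mult_eq_1[of "1 + G"] by (simp add: algebra_simps)
qed

text \<open>Compare coefficients in L' (1 + G) = G' for L = log (1 + G).\<close>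

lemma fps_ln_compose_nth_Suc:
  fixes G :: "real fps"
  assumes G0: "fps_nth G 0 = 0"
  defines "L \<equiv> fps_ln 1 oo G"
  shows "real (Suc m) * fps_nth L (Suc m) = real (Suc m) * fps_nth G (Suc m)
    - (\<Sum>k\<in>{1..m}. real k * fps_nth L k * fps_nth G (Suc m - k))"
proof -
  have "fps_nth (fps_deriv L * (1 + G)) m = fps_nth (fps_deriv G) m"
    using fps_deriv_fps_ln_compose[OF G0] by (simp add: L_def)
  then have coeff_eq: "real (Suc m) * fps_nth L (Suc m)
      + (\<Sum>i = 0..m. real (Suc i) * fps_nth L (Suc i) * fps_nth G (m - i))
      = real (Suc m) * fps_nth G (Suc m)"
    by (simp add: distrib_left fps_mult_nth fps_deriv_nth)
  have "(\<Sum>i = 0..m. real (Suc i) * fps_nth L (Suc i) * fps_nth G (m - i))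
      = (\<Sum>k\<in>{Suc 0..Suc m}. real k * fps_nth L k * fps_nth G (Suc m - k))"
    by (subst sum.shift_bounds_cl_Suc_ivl) simp
  also have "\<dots> = (\<Sum>k\<in>{1..m}. real k * fps_nth L k * fps_nth G (Suc m - k))"
    using G0 by (subst sum.cl_ivl_Suc) auto
  finally show ?thesis
    using coeff_eq by linarith
qed

lemma fps_ln_compose_uminus_nth_Suc:
  fixes B :: "real fps"
  assumes "fps_nth B 0 = 0"
  defines "M \<equiv> - (fps_ln 1 oo - B)"
  shows "real (Suc m) * fps_nth M (Suc m) = real (Suc m) * fps_nth B (Suc m)
    + (\<Sum>k\<in>{1..m}. real k * fps_nth M k * fps_nth B (Suc m - k))"
  using fps_ln_compose_nth_Suc[of "- B" m] assms by (simp add: sum_negf)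

text \<open>B(1/x) = \<Sum> n! / r^n with r = x / y is the sum appearing in the definitions of c_N and d_N.\<close>

definition Vpoly :: "nat \<Rightarrow> real \<Rightarrow> real poly" where
  "Vpoly N y = (\<Sum>n\<in>{1..N}. monom (poly (Ppoly (n - 1)) y) n)"

definition Bpoly :: "nat \<Rightarrow> real \<Rightarrow> real poly" where
  "Bpoly N y = (\<Sum>n\<in>{1..N}. monom (fact n * y ^ n) n)"

lemma coeff_Vpoly: "coeff (Vpoly N y) n = (if 1 \<le> n \<and> n \<le> N then poly (Ppoly (n - 1)) y else 0)"
  by (simp add: Vpoly_def coeff_sum coeff_monom)

lemma coeff_Bpoly: "coeff (Bpoly N y) n = (if 1 \<le> n \<and> n \<le> N then fact n * y ^ n else 0)"
  by (simp add: Bpoly_def coeff_sum coeff_monom)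

lemma W_eq_poly_Vpoly: "W N x y = 1 + poly (Vpoly N y) (1 / x)"
  by (simp add: W_def Vpoly_def poly_sum poly_monom power_one_over)

definition Acoeff :: "real \<Rightarrow> nat \<Rightarrow> real" where
  "Acoeff y n = poly (Ppoly n) y - (real n - 1) * poly (Ppoly (n - 1)) y + poly (pderiv (Ppoly (n - 1))) y"

lemma poly_Ppoly_Suc:
  "poly (Ppoly (Suc m)) y = real (Suc m) * poly (Ppoly m) y - poly (pderiv (Ppoly m)) y
     - 1 / real (Suc m) * (\<Sum>k\<in>{1..m}. real k * Acoeff y k * poly (Ppoly (m - k)) y)"
proof -
  have "(\<Sum>k\<in>{1..m}. real k * ((real k - 1) * poly (Ppoly (k - 1)) y - poly (Ppoly k) y
        - poly (pderiv (Ppoly (k - 1))) y) * poly (Ppoly (m - k)) y)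
      = - (\<Sum>k\<in>{1..m}. real k * Acoeff y k * poly (Ppoly (m - k)) y)"
    unfolding sum_negf[symmetric] by (rule sum.cong) (simp_all add: Acoeff_def algebra_simps)
  then show ?thesis
    by (simp only: Ppoly.simps poly_add poly_diff poly_smult poly_sum poly_mult)
qed

lemma fps_ln_compose_Vpoly_nth:
  assumes "1 \<le> n" "n \<le> N"
  shows "fps_nth (fps_ln 1 oo fps_of_poly (Vpoly N y)) n = Acoeff y n"
  using assms
proof (induction n rule: less_induct)
  case (less n)
  define V where "V = fps_of_poly (Vpoly N y)"
  define L where "L = fps_ln 1 oo V"
  obtain m where m: "n = Suc m" using less.prems by (cases n) auto
  have V0: "fps_nth V 0 = 0"
    by (simp add: V_def coeff_Vpoly)
  have "(\<Sum>k\<in>{1..m}. real k * fps_nth L k * fps_nth V (Suc m - k))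
      = (\<Sum>k\<in>{1..m}. real k * Acoeff y k * poly (Ppoly (m - k)) y)"
    using less m by (intro sum.cong) (auto simp: L_def V_def coeff_Vpoly Suc_diff_le)
  moreover have "fps_nth V (Suc m) = poly (Ppoly m) y"
    using less.prems m by (simp add: V_def coeff_Vpoly)
  ultimately have "fps_nth L (Suc m) = poly (Ppoly m) y
      - 1 / real (Suc m) * (\<Sum>k\<in>{1..m}. real k * Acoeff y k * poly (Ppoly (m - k)) y)"
    using fps_ln_compose_nth_Suc[OF V0, of m] by (simp add: L_def field_simps)
  also have "\<dots> = Acoeff y (Suc m)"
    unfolding Acoeff_def poly_Ppoly_Suc by (simp add: algebra_simps)
  finally show ?case
    unfolding m L_def V_def .
qed

lemma of_nat_aseq_Suc: "real (aseq (Suc m))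
    = real (Suc m) * fact (Suc m) + (\<Sum>k\<in>{1..m}. real (aseq k) * fact (Suc m - k))"
proof -
  have "(\<Sum>k\<in>{1..m}. fact k * real (aseq (Suc m - k)))
      = (\<Sum>k\<in>{1..m}. fact (m + 1 - k) * real (aseq (Suc m - (m + 1 - k))))"
    by (rule sum.atLeastAtMost_rev)
  also have "\<dots> = (\<Sum>k\<in>{1..m}. real (aseq k) * fact (Suc m - k))"
    by (rule sum.cong) auto
  finally show ?thesis
    by (simp only: aseq.simps of_nat_add of_nat_mult of_nat_sum of_nat_fact)
qed

lemma fps_ln_compose_Bpoly_nth:
  assumes "1 \<le> n" "n \<le> N"
  shows "fps_nth (fps_ln 1 oo - fps_of_poly (Bpoly N y)) n = - (real (aseq n) * y ^ n / real n)"
proof -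
  define B where "B = fps_of_poly (Bpoly N y)"
  define M where "M = - (fps_ln 1 oo - B)"
  have B0: "fps_nth B 0 = 0"
    by (simp add: B_def coeff_Bpoly)
  have "real n * fps_nth M n = real (aseq n) * y ^ n"
    using assms
  proof (induction n rule: less_induct)
    case (less n)
    obtain m where m: "n = Suc m" using less.prems by (cases n) auto
    have sum_eq: "(\<Sum>k\<in>{1..m}. real k * fps_nth M k * fps_nth B (Suc m - k))
        = (\<Sum>k\<in>{1..m}. real (aseq k) * fact (Suc m - k) * y ^ Suc m)"
    proof (rule sum.cong)
      fix k
      assume k: "k \<in> {1..m}"
      have "y ^ k * y ^ (Suc m - k) = y ^ Suc m"
        using k by (simp flip: power_add)
      moreover have "1 \<le> Suc m - k" "Suc m - k \<le> N"
        using k less.prems m by auto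
      ultimately show "real k * fps_nth M k * fps_nth B (Suc m - k) = real (aseq k) * fact (Suc m - k) * y ^ Suc m"
        using less.IH[of k] k less.prems m by (simp add: B_def coeff_Bpoly)
    qed simp
    have B_Suc: "fps_nth B (Suc m) = fact (Suc m) * y ^ Suc m"
      using less.prems m by (simp add: B_def coeff_Bpoly)
    have "real (Suc m) * fps_nth M (Suc m) = real (Suc m) * fps_nth B (Suc m)
        + (\<Sum>k\<in>{1..m}. real k * fps_nth M k * fps_nth B (Suc m - k))"
      unfolding M_def by (rule fps_ln_compose_uminus_nth_Suc[OF B0])
    also have "\<dots> = (real (Suc m) * fact (Suc m) + (\<Sum>k\<in>{1..m}. real (aseq k) * fact (Suc m - k)))
        * y ^ Suc m"
      unfolding sum_eq B_Suc by (simp only: distrib_right sum_distrib_right mult.assoc)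
    also have "\<dots> = real (aseq (Suc m)) * y ^ Suc m"
      by (simp only: of_nat_aseq_Suc)
    finally show ?case
      unfolding m .
  qed
  then show ?thesis
    using assms by (simp add: M_def B_def field_simps)
qed

section \<open>Truncating the logarithm of a dominated series\<close>

definition poly_trunc :: "nat \<Rightarrow> real poly \<Rightarrow> real \<Rightarrow> real" where
  "poly_trunc N p u = (\<Sum>n\<le>N. coeff p n * u ^ n)"

lemma abs_poly_minus_trunc_le:
  assumes "dominated p q" "u \<ge> 0"
  shows "\<bar>poly p u - poly_trunc N p u\<bar> \<le> poly q u - poly_trunc N q u"
proof -
  define D where "D = N + max (degree p) (degree q)"
  have tail: "poly r u - poly_trunc N r u = (\<Sum>n\<in>{Suc N..D}. coeff r n * u ^ n)"
    if "degree r \<le> D" for r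
    unfolding poly_trunc_def poly_eq_sum_atMost[OF that] D_def by (simp add: sum_up_index_split)
  have "\<bar>\<Sum>n\<in>{Suc N..D}. coeff p n * u ^ n\<bar> \<le> (\<Sum>n\<in>{Suc N..D}. \<bar>coeff p n * u ^ n\<bar>)"
    by (rule sum_abs)
  also have "\<dots> \<le> (\<Sum>n\<in>{Suc N..D}. coeff q n * u ^ n)"
    using assms unfolding dominated_def by (intro sum_mono) (auto simp: abs_mult intro: mult_right_mono)
  finally show ?thesis
    using tail[of p] tail[of q] by (simp add: D_def)
qed

lemma coeff_power_eq_0:
  fixes p :: "real poly"
  assumes "coeff p 0 = 0" "n < k"
  shows "coeff (p ^ k) n = 0"
  using startsby_zero_power_prefix[of "fps_of_poly p" k] assms
  by (simp flip: fps_of_poly_power)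

lemma poly_trunc_power_eq_0: "coeff p 0 = 0 \<Longrightarrow> N < k \<Longrightarrow> poly_trunc N (p ^ k) u = 0"
  unfolding poly_trunc_def by (intro sum.neutral) (auto simp: coeff_power_eq_0)

lemma sum_poly_trunc_power:
  assumes "coeff p 0 = 0"
  shows "(\<Sum>k\<le>N. c k * poly_trunc N (p ^ k) u) = (\<Sum>n\<le>N. (\<Sum>k=0..n. c k * coeff (p ^ k) n) * u ^ n)"
proof -
  have "(\<Sum>k\<le>N. c k * poly_trunc N (p ^ k) u) = (\<Sum>k\<le>N. \<Sum>n\<le>N. c k * coeff (p ^ k) n * u ^ n)"
    unfolding poly_trunc_def by (simp add: sum_distrib_left mult.assoc)
  also have "\<dots> = (\<Sum>n\<le>N. \<Sum>k\<le>N. c k * coeff (p ^ k) n * u ^ n)"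
    by (rule sum.swap)
  also have "\<dots> = (\<Sum>n\<le>N. (\<Sum>k=0..n. c k * coeff (p ^ k) n) * u ^ n)"
  proof (rule sum.cong)
    fix n
    assume "n \<in> {..N}"
    then have "(\<Sum>k\<le>N. c k * coeff (p ^ k) n * u ^ n) = (\<Sum>k=0..n. c k * coeff (p ^ k) n * u ^ n)"
      using assms by (intro sum.mono_neutral_right) (auto simp: coeff_power_eq_0)
    then show "(\<Sum>k\<le>N. c k * coeff (p ^ k) n * u ^ n) = (\<Sum>k=0..n. c k * coeff (p ^ k) n) * u ^ n"
      by (simp add: sum_distrib_right)
  qed simp
  finally show ?thesis .
qed

lemma sum_fps_ln_poly_trunc_power:
  assumes "coeff p 0 = 0"
  shows "(\<Sum>k\<le>N. fps_nth (fps_ln 1) k * poly_trunc N (p ^ k) u)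
    = (\<Sum>n\<le>N. fps_nth (fps_ln 1 oo fps_of_poly p) n * u ^ n)"
  unfolding sum_poly_trunc_power[OF assms]
  by (rule sum.cong) (auto simp: fps_compose_nth fps_of_poly_power[symmetric])

lemma fps_nth_uminus_power: "fps_nth ((- Q :: real fps) ^ i) n = (-1) ^ i * fps_nth (Q ^ i) n"
proof (induction i arbitrary: n)
  case 0
  then show ?case by simp
next
  case (Suc i)
  have "fps_nth (Q * (- Q) ^ i) n = (-1) ^ i * fps_nth (Q * Q ^ i) n"
    unfolding fps_mult_nth Suc.IH sum_distrib_left by (simp add: ac_simps)
  then show ?case by simp
qed

lemma fps_ln_nth_mult_neg_one_power: "fps_nth (fps_ln (1::real)) k * (-1) ^ k = - (1 / real k)"
proof (cases k)
  case (Suc j)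
  have "(-1::real) ^ j * (-1) ^ j = 1"
    by (induction j) simp_all
  then show ?thesis
    using Suc by (simp add: fps_ln_nth)
qed simp

lemma sum_inverse_poly_trunc_power:
  assumes "coeff q 0 = 0"
  shows "(\<Sum>k\<le>N. 1 / real k * poly_trunc N (q ^ k) u)
    = (\<Sum>n\<le>N. fps_nth (- (fps_ln 1 oo - fps_of_poly q)) n * u ^ n)"
  unfolding sum_poly_trunc_power[OF assms]
proof (rule sum.cong)
  fix n
  have "fps_nth (fps_ln 1) k * fps_nth ((- fps_of_poly q) ^ k) n
      = (fps_nth (fps_ln 1) k * (-1) ^ k) * coeff (q ^ k) n" for k
    unfolding fps_nth_uminus_power fps_of_poly_power [symmetric] fps_of_poly_nth by (simp only: ac_simps)
  then show "(\<Sum>k = 0..n. 1 / real k * coeff (q ^ k) n) * u ^ n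
      = fps_nth (- (fps_ln 1 oo - fps_of_poly q)) n * u ^ n"
    by (simp add: fps_compose_nth fps_ln_nth_mult_neg_one_power sum_negf)
qed simp

lemma fps_ln_one_sums:
  fixes v :: real
  assumes "\<bar>v\<bar> < 1"
  shows "(\<lambda>k. fps_nth (fps_ln 1) k * v ^ k) sums ln (1 + v)"
proof -
  have "- ((- v) ^ k) / real k = fps_nth (fps_ln 1) k * v ^ k" for k
  proof (cases k)
    case (Suc j)
    have "(- v) ^ k = (-1) ^ k * v ^ k"
      by (rule power_minus)
    then show ?thesis
      using Suc by (simp add: fps_ln_nth)
  qed simp
  then show ?thesis
    using ln_series'[OF assms] by simp
qed

lemma minus_ln_one_minus_sums:
  fixes b :: real
  assumes "0 \<le> b" "b < 1"
  shows "(\<lambda>k. 1 / real k * b ^ k) sums (- ln (1 - b))"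
proof -
  have "(\<lambda>k. - ((- (- b)) ^ k) / real k) sums ln (1 + - b)"
    using assms by (intro ln_series') simp
  then show ?thesis
    using sums_minus by fastforce
qed

text \<open>Expand log (1 + p(u)) = \<Sum>k c_k p(u)^k with |c_k| = 1/k: the part of p^k beyond degree N
  is dominated by that of q^k, and summing over k gives the tail of -log (1 - q(u)).\<close>

lemma abs_ln_one_plus_poly_minus_trunc_le:
  fixes p q :: "real poly"
  assumes dom: "dominated p q" and p0: "coeff p 0 = 0" and q0: "coeff q 0 = 0"
    and u: "u \<ge> 0" and q_lt_1: "poly q u < 1"
  shows "\<bar>ln (1 + poly p u) - (\<Sum>n\<le>N. fps_nth (fps_ln 1 oo fps_of_poly p) n * u ^ n)\<bar>
    \<le> - ln (1 - poly q u) - (\<Sum>n\<le>N. fps_nth (- (fps_ln 1 oo - fps_of_poly q)) n * u ^ n)"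
proof -
  define c where "c k = fps_nth (fps_ln (1::real)) k" for k
  define v where "v = poly p u"
  define b where "b = poly q u"
  have vb: "\<bar>v\<bar> \<le> b"
    unfolding v_def b_def by (rule abs_poly_le_dominating[OF dom u])
  have "(\<lambda>k. c k * poly_trunc N (p ^ k) u) sums (\<Sum>k\<le>N. c k * poly_trunc N (p ^ k) u)"
    by (rule sums_finite) (auto simp: poly_trunc_power_eq_0[OF p0])
  with fps_ln_one_sums[of v] have lhs: "(\<lambda>k. c k * (v ^ k - poly_trunc N (p ^ k) u))
      sums (ln (1 + v) - (\<Sum>k\<le>N. c k * poly_trunc N (p ^ k) u))"
    using vb q_lt_1 sums_diff unfolding c_def b_def by (fastforce simp: right_diff_distrib)
  have "(\<lambda>k. 1 / real k * poly_trunc N (q ^ k) u) sums (\<Sum>k\<le>N. 1 / real k * poly_trunc N (q ^ k) u)"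
    by (rule sums_finite) (auto simp: poly_trunc_power_eq_0[OF q0])
  with minus_ln_one_minus_sums[of b] have rhs: "(\<lambda>k. 1 / real k * (b ^ k - poly_trunc N (q ^ k) u))
      sums (- ln (1 - b) - (\<Sum>k\<le>N. 1 / real k * poly_trunc N (q ^ k) u))"
    using vb q_lt_1 sums_diff unfolding b_def by (fastforce simp: right_diff_distrib)
  have term_le: "\<bar>c k * (v ^ k - poly_trunc N (p ^ k) u)\<bar>
      \<le> 1 / real k * (b ^ k - poly_trunc N (q ^ k) u)" for k
  proof -
    have "\<bar>c k\<bar> = 1 / real k"
      by (cases k) (auto simp: c_def fps_ln_nth abs_mult power_abs)
    moreover have "\<bar>v ^ k - poly_trunc N (p ^ k) u\<bar> \<le> b ^ k - poly_trunc N (q ^ k) u"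
      using abs_poly_minus_trunc_le[OF dominated_power[OF dom] u] by (simp add: v_def b_def poly_power)
    ultimately show ?thesis
      by (simp add: abs_mult divide_right_mono)
  qed
  have "ln (1 + v) - (\<Sum>k\<le>N. c k * poly_trunc N (p ^ k) u)
      \<le> - ln (1 - b) - (\<Sum>k\<le>N. 1 / real k * poly_trunc N (q ^ k) u)"
    using abs_le_D1[OF term_le] by (intro sums_le[OF _ lhs rhs])
  moreover have "- (- ln (1 - b) - (\<Sum>k\<le>N. 1 / real k * poly_trunc N (q ^ k) u))
      \<le> ln (1 + v) - (\<Sum>k\<le>N. c k * poly_trunc N (p ^ k) u)"
    using abs_le_D2[OF term_le] by (intro sums_le[OF _ sums_minus[OF rhs] lhs]) (simp add: minus_le_iff)
  ultimately have "\<bar>ln (1 + v) - (\<Sum>k\<le>N. c k * poly_trunc N (p ^ k) u)\<bar>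
      \<le> - ln (1 - b) - (\<Sum>k\<le>N. 1 / real k * poly_trunc N (q ^ k) u)"
    by (simp add: abs_le_iff)
  then show ?thesis
    unfolding c_def v_def b_def sum_fps_ln_poly_trunc_power[OF p0] sum_inverse_poly_trunc_power[OF q0] .
qed

section \<open>The differential expression in terms of the A_n\<close>

lemma deriv_W_x:
  assumes "x > 0"
  shows "deriv (\<lambda>t. W N t y) x = (\<Sum>n\<in>{1..N}. - real n * poly (Ppoly (n - 1)) y / x ^ Suc n)"
proof -
  have "((\<lambda>t. poly (Ppoly (n - 1)) y / t ^ n) has_real_derivative
      - real n * poly (Ppoly (n - 1)) y / x ^ Suc n) (at x)" if n: "n \<in> {1..N}" for n
  proof -
    obtain k where k: "n = Suc k" using n by (cases n) auto
    have "((\<lambda>t. poly (Ppoly (n - 1)) y / t ^ n) has_real_derivative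
        (0 * x ^ n - poly (Ppoly (n - 1)) y * (real n * x ^ (n - Suc 0))) / (x ^ n * x ^ n)) (at x)"
      using assms by (intro DERIV_divide DERIV_pow DERIV_const) auto
    moreover have "(0 * x ^ n - poly (Ppoly (n - 1)) y * (real n * x ^ (n - Suc 0))) / (x ^ n * x ^ n)
        = - real n * poly (Ppoly (n - 1)) y / x ^ Suc n"
      using assms unfolding k by (simp add: field_simps)
    ultimately show ?thesis by simp
  qed
  then have "((\<lambda>t. W N t y) has_real_derivative
      0 + (\<Sum>n\<in>{1..N}. - real n * poly (Ppoly (n - 1)) y / x ^ Suc n)) (at x)"
    unfolding W_def by (intro DERIV_add DERIV_const DERIV_sum)
  then show ?thesis
    by (intro DERIV_imp_deriv) simp
qed

lemma deriv_W_y: "deriv (\<lambda>t. W N x t) y = (\<Sum>n\<in>{1..N}. poly (pderiv (Ppoly (n - 1))) y / x ^ n)"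
proof -
  have "((\<lambda>t. W N x t) has_real_derivative
      0 + (\<Sum>n\<in>{1..N}. poly (pderiv (Ppoly (n - 1))) y / x ^ n)) (at y)"
    unfolding W_def by (intro DERIV_add DERIV_const DERIV_sum DERIV_cdivide poly_DERIV)
  then show ?thesis
    by (intro DERIV_imp_deriv) simp
qed

lemma sum_Ppoly_pred_mult_shift:
  assumes "N \<ge> 1" "(x::real) > 0"
  shows "(\<Sum>n\<in>{1..N}. x * (poly (Ppoly (n - 1)) y / x ^ n))
    = (y - 1) + (\<Sum>n\<in>{1..N}. poly (Ppoly n) y / x ^ n) - poly (Ppoly N) y / x ^ N"
  using assms(1)
proof (induction N rule: dec_induct)
  case base
  then show ?case using assms by simp
next
  case (step N)
  then show ?case using assms by simp
qed

lemma W_differential_expr_eq: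
  assumes "N \<ge> 1" "(x::real) > 0"
  shows "W N x y + x * W N x y + x * deriv (\<lambda>t. W N t y) x + deriv (\<lambda>t. W N x t) y - x - y
    = (\<Sum>n\<in>{1..N}. Acoeff y n / x ^ n) - poly (Ppoly N) y / x ^ N"
proof -
  define w where "w n = poly (Ppoly (n - 1)) y" for n
  have xW: "x * W N x y = x + (y - 1) + (\<Sum>n\<in>{1..N}. poly (Ppoly n) y / x ^ n) - poly (Ppoly N) y / x ^ N"
    using sum_Ppoly_pred_mult_shift[OF assms, of y] by (simp add: W_def distrib_left sum_distrib_left)
  have xWx: "x * deriv (\<lambda>t. W N t y) x = - (\<Sum>n\<in>{1..N}. real n * w n / x ^ n)"
    unfolding deriv_W_x[OF assms(2)] sum_distrib_left sum_negf[symmetric]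
    using assms(2) by (intro sum.cong) (simp_all add: w_def)
  have "(\<Sum>n\<in>{1..N}. Acoeff y n / x ^ n) = (\<Sum>n\<in>{1..N}. poly (Ppoly n) y / x ^ n)
      - (\<Sum>n\<in>{1..N}. real n * w n / x ^ n) + (\<Sum>n\<in>{1..N}. w n / x ^ n)
      + (\<Sum>n\<in>{1..N}. poly (pderiv (Ppoly (n - 1))) y / x ^ n)"
    unfolding sum_subtractf[symmetric] sum.distrib[symmetric]
    by (intro sum.cong) (simp_all add: Acoeff_def w_def diff_divide_distrib add_divide_distrib algebra_simps)
  then show ?thesis
    unfolding xW xWx deriv_W_y by (simp add: W_def w_def)
qed

lemma divide_ln_mono:
  fixes a b :: real
  assumes "exp 1 \<le> a" "a \<le> b"
  shows "a / ln a \<le> b / ln b"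
proof (rule DERIV_nonneg_imp_nondecreasing[OF assms(2)])
  fix x
  assume "a \<le> x" "x \<le> b"
  then have "exp 1 \<le> x"
    using assms by simp
  moreover have "x > 0"
    using \<open>exp 1 \<le> x\<close> exp_gt_zero[of 1] by linarith
  ultimately have x: "x > 0" "ln x \<ge> 1"
    by (simp_all add: ln_ge_iff)
  then have "((\<lambda>t. t / ln t) has_real_derivative (1 * ln x - x * inverse x) / (ln x * ln x)) (at x)"
    by (intro DERIV_divide DERIV_ln DERIV_ident) auto
  moreover have "(1 * ln x - x * inverse x) / (ln x * ln x) \<ge> 0"
    using x by simp
  ultimately show "\<exists>y. ((\<lambda>t. t / ln t) has_real_derivative y) (at x) \<and> 0 \<le> y"
    by blast
qed

lemma fact_sum_lt_1_if_c_prop: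
  assumes "c_prop N c" "r \<ge> c"
  shows "(\<Sum>n\<in>{1..N}. fact n / r ^ n) < 1"
proof -
  have r: "r * (1 - (\<Sum>n\<in>{1..N}. fact n / r ^ n)) \<ge> 1" "r > 0"
    using assms by (auto simp: c_prop_def)
  show ?thesis
  proof (rule ccontr)
    assume "\<not> ?thesis"
    then have "r * (1 - (\<Sum>n\<in>{1..N}. fact n / r ^ n)) \<le> 0"
      using r(2) by (intro mult_nonneg_nonpos) auto
    then show False
      using r(1) by simp
  qed
qed

lemma ln_fact_sum_le_if_d_prop:
  fixes r :: real
  assumes "d_prop N d" "r \<ge> d" and lt_1: "(\<Sum>n\<in>{1..N}. fact n / r ^ n) < 1"
  shows "- ln (1 - (\<Sum>n\<in>{1..N}. fact n / r ^ n)) - (\<Sum>n\<in>{1..N}. real (aseq n) / real n / r ^ n)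
    \<le> real (aseq (N + 1)) / real (N + 1) / r ^ (N + 1)"
proof -
  define B where "B = (\<Sum>n\<in>{1..N}. fact n / r ^ n)"
  define S where "S = (\<Sum>n\<in>{1..N}. real (aseq n) / real n / r ^ n)"
  define K where "K = real (aseq (N + 1)) / real (N + 1) / r ^ (N + 1)"
  have r: "r > 0"
    using assms by (auto simp: d_prop_def)
  have "norm (complex_of_real r) \<ge> d"
    using assms r by simp
  then obtain \<theta> :: complex where \<theta>: "norm \<theta> \<le> 1"
    and Ln_eq: "Ln (inverse (1 - (\<Sum>n\<in>{1..N}. fact n / complex_of_real r ^ n)))
      = (\<Sum>n\<in>{1..N}. of_nat (aseq n) / of_nat n / complex_of_real r ^ n)
        + \<theta> * of_nat (aseq (N + 1)) / of_nat (N + 1) / complex_of_real r ^ (N + 1)"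
    using assms(1) unfolding d_prop_def by blast
  have "Ln (inverse (1 - complex_of_real B)) = complex_of_real (ln (inverse (1 - B)))"
    using lt_1 Ln_of_real[of "inverse (1 - B)"] by (simp add: B_def)
  with Ln_eq have "complex_of_real (ln (inverse (1 - B))) = of_real S + \<theta> * of_real K"
    by (simp add: B_def S_def K_def of_real_sum)
  then have "Re (complex_of_real (ln (inverse (1 - B)))) = Re (of_real S + \<theta> * of_real K)"
    by (rule arg_cong)
  then have "ln (inverse (1 - B)) = S + Re \<theta> * K"
    by simp
  moreover have "Re \<theta> * K \<le> 1 * K"
    using abs_Re_le_cmod[of \<theta>] \<theta> r
    by (intro mult_right_mono) (auto simp: K_def simp del: aseq.simps)
  ultimately show ?thesis
    by (simp add: ln_inverse B_def S_def K_def)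
qed

lemma abs_ln_W_minus_sum_Acoeff_le:
  assumes "c_prop N c" "d_prop N d" "x > 0" "y \<ge> 2" "x / y \<ge> c" "x / y \<ge> d"
  shows "\<bar>ln (W N x y) - (\<Sum>n\<in>{1..N}. Acoeff y n / x ^ n)\<bar>
    \<le> real (aseq (N + 1)) / real (N + 1) / (x / y) ^ (N + 1)"
proof -
  define r where "r = x / y"
  have at_most_N: "{..N} = insert 0 {1..N}"
    by auto
  have dom: "dominated (Vpoly N y) (Bpoly N y)"
    using abs_poly_Ppoly_pred_le[OF _ assms(4)] by (simp add: dominated_def coeff_Vpoly coeff_Bpoly)
  have B_eq: "poly (Bpoly N y) (1 / x) = (\<Sum>n\<in>{1..N}. fact n / r ^ n)"
    unfolding Bpoly_def poly_sum poly_monom r_def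
    using assms(3,4) by (intro sum.cong) (simp_all add: power_divide)
  have lt_1: "(\<Sum>n\<in>{1..N}. fact n / r ^ n) < 1"
    using fact_sum_lt_1_if_c_prop assms(1,5) by (simp add: r_def)
  have "\<bar>ln (1 + poly (Vpoly N y) (1 / x))
      - (\<Sum>n\<le>N. fps_nth (fps_ln 1 oo fps_of_poly (Vpoly N y)) n * (1 / x) ^ n)\<bar>
    \<le> - ln (1 - poly (Bpoly N y) (1 / x))
      - (\<Sum>n\<le>N. fps_nth (- (fps_ln 1 oo - fps_of_poly (Bpoly N y))) n * (1 / x) ^ n)"
    using lt_1 assms(3)
    by (intro abs_ln_one_plus_poly_minus_trunc_le dom) (simp_all add: coeff_Vpoly coeff_Bpoly B_eq)
  also have "(\<Sum>n\<le>N. fps_nth (- (fps_ln 1 oo - fps_of_poly (Bpoly N y))) n * (1 / x) ^ n)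
      = (\<Sum>n\<in>{1..N}. real (aseq n) / real n / r ^ n)"
    unfolding at_most_N using assms(3,4)
    by (subst sum.insert) (auto intro!: sum.cong simp: fps_ln_compose_Bpoly_nth r_def power_divide)
  also have "- ln (1 - poly (Bpoly N y) (1 / x)) - (\<Sum>n\<in>{1..N}. real (aseq n) / real n / r ^ n)
      \<le> real (aseq (N + 1)) / real (N + 1) / r ^ (N + 1)"
    unfolding B_eq using assms(2,6) lt_1 by (intro ln_fact_sum_le_if_d_prop) (simp_all add: r_def)
  also have "(\<Sum>n\<le>N. fps_nth (fps_ln 1 oo fps_of_poly (Vpoly N y)) n * (1 / x) ^ n)
      = (\<Sum>n\<in>{1..N}. Acoeff y n / x ^ n)"
    unfolding at_most_N
    by (subst sum.insert) (auto intro!: sum.cong simp: fps_ln_compose_Vpoly_nth power_one_over)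
  finally show ?thesis
    by (simp add: W_eq_poly_Vpoly r_def)
qed

lemma abs_W_differential_expr_le:
  assumes "N \<ge> 1" "c_prop N c" "d_prop N d" "x \<ge> exp 2" "x / ln x \<ge> max 2 (max c d)"
  defines "y \<equiv> ln x"
  shows "\<bar>W N x y + x * W N x y + x * deriv (\<lambda>t. W N t y) x + deriv (\<lambda>t. W N x t) y
      - x - y - ln (W N x y)\<bar> \<le> 3 * fact (N + 1) * y ^ N / x ^ N"
proof -
  define r where "r = x / y"
  have x: "x > 0"
    using assms(4) by (meson exp_gt_zero less_le_trans)
  have y: "y \<ge> 2"
    using assms(4) x by (simp add: y_def ln_ge_iff)
  have r: "r \<ge> 2" "r \<ge> c" "r \<ge> d"
    using assms(5) by (simp_all add: r_def y_def)
  have y_div_x: "y ^ N / x ^ N = 1 / r ^ N"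
    using x y by (simp add: r_def power_divide)
  define F where "F = fact (N + 1) * (y ^ N / x ^ N)"
  have "\<bar>poly (Ppoly N) y\<bar> / x ^ N \<le> 9/8 * fact (N + 1) * y ^ N / x ^ N"
    using abs_poly_Ppoly_le[OF assms(1) y] x by (intro divide_right_mono) auto
  then have P_le: "\<bar>poly (Ppoly N) y / x ^ N\<bar> \<le> 9/8 * F"
    using x by (simp add: abs_divide F_def)
  have "\<bar>ln (W N x y) - (\<Sum>n\<in>{1..N}. Acoeff y n / x ^ n)\<bar>
      \<le> real (aseq (N + 1)) / real (N + 1) / r ^ (N + 1)"
    using abs_ln_W_minus_sum_Acoeff_le[OF assms(2,3) x y] r by (simp add: r_def)
  also have "\<dots> \<le> 3 * fact (N + 1) / r ^ (N + 1)"
    using aseq_le[of "N + 1"] r by (intro divide_right_mono) (auto simp: field_simps)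
  also have "\<dots> = 3 * fact (N + 1) * (1 / r ^ N) * (1 / r)"
    by simp
  also have "\<dots> \<le> 3 * fact (N + 1) * (1 / r ^ N) * (1 / 2)"
    using r by (intro mult_left_mono) (auto simp: field_simps)
  also have "\<dots> = 3/2 * F"
    unfolding F_def y_div_x by simp
  finally have ln_le: "\<bar>ln (W N x y) - (\<Sum>n\<in>{1..N}. Acoeff y n / x ^ n)\<bar> \<le> 3/2 * F" .
  have "\<bar>(\<Sum>n\<in>{1..N}. Acoeff y n / x ^ n) - poly (Ppoly N) y / x ^ N - ln (W N x y)\<bar> \<le> 3 * F"
    using P_le ln_le unfolding abs_le_iff by linarith
  then show ?thesis
    unfolding W_differential_expr_eq[OF assms(1) x] by (simp add: F_def)
qed

lemma ex_unit_multiple_if_abs_le: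
  fixes e f :: real
  assumes "\<bar>e\<bar> \<le> f"
  shows "\<exists>\<theta>. \<bar>\<theta>\<bar> \<le> 1 \<and> e = \<theta> * f"
proof (cases "f = 0")
  case True
  then show ?thesis using assms by (intro exI[of _ 0]) auto
next
  case False
  then show ?thesis
    using assms by (intro exI[of _ "e / f"]) (auto simp: abs_divide divide_le_eq_1)
qed

theorem proposition5p12:
  fixes N :: nat and c d \<beta> :: real
  assumes "N \<ge> 1"
    and "c_prop N c"
    and "d_prop N d"
    and "\<beta> \<ge> exp 1"
    and "\<beta> / ln \<beta> = max (exp 1) (max c d)"
  shows "\<forall>x::real. x \<ge> max \<beta> (max (4 * real (N + 1) / 3) (exp 2)) \<longrightarrow>
           (\<exists>\<theta>::real. \<bar>\<theta>\<bar> \<le> 1 \<and>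
              W N x (ln x) + x * W N x (ln x)
              + x * deriv (\<lambda>t. W N t (ln x)) x
              + deriv (\<lambda>t. W N x t) (ln x)
              - x - ln x - ln (W N x (ln x))
              = \<theta> * (3 * fact (N + 1)) * (ln x) ^ N / x ^ N)"
proof (intro allI impI)
  fix x :: real
  assume x: "x \<ge> max \<beta> (max (4 * real (N + 1) / 3) (exp 2))"
  have "max 2 (max c d) \<le> \<beta> / ln \<beta>"
    using assms(5) exp_ge_add_one_self[of 1] by linarith
  also have "\<dots> \<le> x / ln x"
    using assms(4) x by (intro divide_ln_mono) auto
  finally have "\<bar>W N x (ln x) + x * W N x (ln x) + x * deriv (\<lambda>t. W N t (ln x)) x
      + deriv (\<lambda>t. W N x t) (ln x) - x - ln x - ln (W N x (ln x))\<bar>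
      \<le> 3 * fact (N + 1) * (ln x) ^ N / x ^ N"
    using x by (intro abs_W_differential_expr_le[OF assms(1-3)]) auto
  then obtain \<theta> where "\<bar>\<theta>\<bar> \<le> 1"
    and "W N x (ln x) + x * W N x (ln x) + x * deriv (\<lambda>t. W N t (ln x)) x
      + deriv (\<lambda>t. W N x t) (ln x) - x - ln x - ln (W N x (ln x))
      = \<theta> * (3 * fact (N + 1) * (ln x) ^ N / x ^ N)"
    by (blast dest: ex_unit_multiple_if_abs_le)
  then show "\<exists>\<theta>::real. \<bar>\<theta>\<bar> \<le> 1 \<and>
      W N x (ln x) + x * W N x (ln x) + x * deriv (\<lambda>t. W N t (ln x)) x
      + deriv (\<lambda>t. W N x t) (ln x) - x - ln x - ln (W N x (ln x))
      = \<theta> * (3 * fact (N + 1)) * (ln x) ^ N / x ^ N"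
    by (intro exI[of _ \<theta>]) (simp add: mult.assoc)
qed

end
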